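(* Let $H\in\mathbb{R}^{n_z\times n_z}$ be symmetric positive definite, $F\in\mathbb{R}^{n_x\times n_z}$, $G\in\mathbb{R}^{n_c\times n_z}$, $S\in\mathbb{R}^{n_c\times n_x}$, $w\in\mathbb{R}^{n_c}$, and assume $\{z: Gz\le Sx+w\}\neq\emptyset$ for every $x\in\mathbb{R}^{n_x}$. Let $\kappa$ be a global Lipschitz constant of this mp-QP, let $\hat{x},x\in\mathbb{R}^{n_x}$, and define $$\mathbb{I}(x)=\mathbb{A}(\hat{x})\cup\big\{j\in\mathbb{A}^c(\hat{x}) : \mathcal{B}(z^*(\hat{x}),\kappa\|x-\hat{x}\|)\not\subseteq\mathcal{Z}_j(x)\big\}.$$ Then $z^*(x,\mathbb{I}(x))=z^*(x)$.
   Context: For a parameter $x$, mp-QP$(x)$ is: minimize $V(z)=\frac12 z^THz+x^TFz$ over $z\in\mathcal{Z}(x)=\{z\in\mathbb{R}^{n_z}: Gz\le Sx+w\}$. $G_j,S_j$ are the $j$-th rows of $G,S$, $w_j$ the $j$-th entry of $w$, and $\mathcal{Z}_j(x)=\{z: G_jz\le S_jx+w_j\}$. For $\mathbb{I}\subseteq\{1,\dots,n_c\}$, $\mathcal{Z}(x,\mathbb{I})=\bigcap_{j\in\mathbb{I}}\mathcal{Z}_j(x)$ ($=\mathbb{R}^{n_z}$ if $\mathbb{I}=\emptyset$) and $z^*(x,\mathbb{I})$ is the unique minimizer of $V$ over $\mathcal{Z}(x,\mathbb{I})$; $z^*(x)=z^*(x,\{1,\dots,n_c\})$. Active set $\mathbb{A}(x)=\{j: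 G_jz^*(x)=S_jx+w_j\}$, inactive set $\mathbb{A}^c(x)=\{j: G_jz^*(x)<S_jx+w_j\}$. A global Lipschitz constant (GLC) is a number $\kappa\in\mathbb{R}$ such that $\|z^*(x_1,\mathbb{I})-z^*(x_2,\mathbb{I})\|\le\kappa\|x_1-x_2\|$ for all $x_1,x_2\in\mathbb{R}^{n_x}$ and all $\mathbb{I}\subseteq\{1,\dots,n_c\}$. $\mathcal{B}(q,r)=\{v:\|v-q\|\le r\}$ (Euclidean norm). When $G_j\neq0$, the condition $\mathcal{B}(z^*(\hat x),\kappa\|x-\hat x\|)\not\subseteq\mathcal{Z}_j(x)$ is equivalent to $\kappa\|x-\hat{x}\|>\frac{w_j+S_jx-G_jz^*(\hat{x})}{\|G_j\|}$ (this is the set computed by the paper's Algorithm 1). *)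

theory Defs
  imports "HOL-Analysis.Analysis"
begin

text \<open>mp-QP data: H :: nz x nz, F :: nx x nz, G :: nc x nz, S :: nc x nx, w :: nc.
  Rows of a matrix M are M $ j. Dimensions are finite index types.\<close>

definition sym_pos_def_mat :: "real^'n^'n \<Rightarrow> bool" where
  "sym_pos_def_mat H \<longleftrightarrow> transpose H = H \<and> (\<forall>z. z \<noteq> 0 \<longrightarrow> z \<bullet> (H *v z) > 0)"

definition qp_cost :: "real^'nz^'nz \<Rightarrow> real^'nz^'nx \<Rightarrow> real^'nx \<Rightarrow> real^'nz \<Rightarrow> real" where
  "qp_cost H F x z = (1/2) * (z \<bullet> (H *v z)) + x \<bullet> (F *v z)"

definition Zj :: "real^'nz^'nc \<Rightarrow> real^'nx^'nc \<Rightarrow> real^'nc \<Rightarrow> 'nc \<Rightarrow> real^'nx \<Rightarrow> (real^'nz) set" where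
  "Zj G S w j x = {z. (G $ j) \<bullet> z \<le> (S $ j) \<bullet> x + w $ j}"

definition ZI :: "real^'nz^'nc \<Rightarrow> real^'nx^'nc \<Rightarrow> real^'nc \<Rightarrow> real^'nx \<Rightarrow> 'nc set \<Rightarrow> (real^'nz) set" where
  "ZI G S w x I = (\<Inter>j\<in>I. Zj G S w j x)"

definition zstarI :: "real^'nz^'nz \<Rightarrow> real^'nz^'nx \<Rightarrow> real^'nz^'nc \<Rightarrow> real^'nx^'nc \<Rightarrow> real^'nc
    \<Rightarrow> real^'nx \<Rightarrow> 'nc set \<Rightarrow> real^'nz" where
  "zstarI H F G S w x I = (THE z. z \<in> ZI G S w x I \<and> (\<forall>y\<in>ZI G S w x I. qp_cost H F x z \<le> qp_cost H F x y))"

definition zstar :: "real^'nz^'nz \<Rightarrow> real^'nz^'nx \<Rightarrow> real^'nz^'nc \<Rightarrow> real^'nx^'nc \<Rightarrow> real^'nc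
    \<Rightarrow> real^'nx \<Rightarrow> real^'nz" where
  "zstar H F G S w x = zstarI H F G S w x UNIV"

definition active_set :: "real^'nz^'nz \<Rightarrow> real^'nz^'nx \<Rightarrow> real^'nz^'nc \<Rightarrow> real^'nx^'nc \<Rightarrow> real^'nc
    \<Rightarrow> real^'nx \<Rightarrow> 'nc set" where
  "active_set H F G S w x = {j. (G $ j) \<bullet> zstar H F G S w x = (S $ j) \<bullet> x + w $ j}"

definition inactive_set :: "real^'nz^'nz \<Rightarrow> real^'nz^'nx \<Rightarrow> real^'nz^'nc \<Rightarrow> real^'nx^'nc \<Rightarrow> real^'nc
    \<Rightarrow> real^'nx \<Rightarrow> 'nc set" where
  "inactive_set H F G S w x = {j. (G $ j) \<bullet> zstar H F G S w x < (S $ j) \<bullet> x + w $ j}"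

definition is_GLC :: "real^'nz^'nz \<Rightarrow> real^'nz^'nx \<Rightarrow> real^'nz^'nc \<Rightarrow> real^'nx^'nc \<Rightarrow> real^'nc
    \<Rightarrow> real \<Rightarrow> bool" where
  "is_GLC H F G S w \<kappa> \<longleftrightarrow>
     (\<forall>x1 x2 I. norm (zstarI H F G S w x1 I - zstarI H F G S w x2 I) \<le> \<kappa> * norm (x1 - x2))"

end

theory Submission
  imports Defs
begin

text \<open>For every \<open>I \<supseteq> A(xh)\<close>, the constraints dropped from the full problem at \<open>xh\<close> hold
  strictly at \<open>z*(xh)\<close>, so \<open>z*(xh)\<close> is a local and hence, by convexity of \<open>V\<close>, a global
  minimiser over \<open>Z(xh, I)\<close>: \<open>z*(xh, I) = z*(xh)\<close>. With \<open>I = I(x)\<close> the Lipschitz bound puts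
  \<open>z*(x, I)\<close> into the ball \<open>B(z*(xh), \<kappa>\<parallel>x - xh\<parallel>)\<close>, which by the choice of \<open>I(x)\<close> lies in
  \<open>Z\<^sub>j(x)\<close> for every \<open>j \<notin> I\<close>. So the minimiser of the relaxed problem is feasible for the full
  one and therefore solves it. Coercivity and strict convexity of \<open>V\<close> provide the existence
  and uniqueness of all minimisers involved, which the definite description in \<open>zstarI\<close> needs.\<close>

lemma symmetric_matrix_inner_commute:
  fixes H :: "real^'n^'n"
  assumes "transpose H = H"
  shows "a \<bullet> (H *v b) = b \<bullet> (H *v a)"
proof -
  have "a \<bullet> (H *v b) = (transpose H *v a) \<bullet> b"
    by (simp add: dot_lmul_matrix)
  then show ?thesis using assms by (simp add: inner_commute)
qed

lemma qp_cost_convex_combination: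
  fixes H :: "real^'n^'n"
  assumes "transpose H = H"
  shows "qp_cost H F x ((1 - t) *\<^sub>R a + t *\<^sub>R b)
    = (1 - t) * qp_cost H F x a + t * qp_cost H F x b - t * (1 - t) / 2 * ((b - a) \<bullet> (H *v (b - a)))"
  using symmetric_matrix_inner_commute[OF assms, of a b]
  unfolding qp_cost_def
  by (simp add: matrix_vector_right_distrib matrix_vector_mult_scaleR matrix_vector_mult_diff_distrib
      inner_add_left inner_add_right inner_diff_left inner_diff_right field_simps)

lemma sym_pos_def_mat_nonneg:
  assumes "sym_pos_def_mat H"
  shows "0 \<le> z \<bullet> (H *v z)"
  using assms by (cases "z = 0") (auto simp: sym_pos_def_mat_def less_imp_le)

lemma convex_on_qp_cost:
  assumes "sym_pos_def_mat H"
  shows "convex_on UNIV (qp_cost H F x)"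
proof (rule convex_onI)
  fix t :: real and a b
  assume "0 < t" "t < 1"
  then have "0 \<le> t * (1 - t) / 2 * ((b - a) \<bullet> (H *v (b - a)))"
    using sym_pos_def_mat_nonneg[OF assms] by simp
  then show "qp_cost H F x ((1 - t) *\<^sub>R a + t *\<^sub>R b) \<le> (1 - t) * qp_cost H F x a + t * qp_cost H F x b"
    using assms by (simp add: qp_cost_convex_combination sym_pos_def_mat_def)
qed simp

lemma qp_cost_minimizer_unique:
  assumes "sym_pos_def_mat H" "convex K" "z1 \<in> K" "z2 \<in> K"
    and "\<forall>y\<in>K. qp_cost H F x z1 \<le> qp_cost H F x y"
    and "\<forall>y\<in>K. qp_cost H F x z2 \<le> qp_cost H F x y"
  shows "z1 = z2"
proof (rule ccontr)
  assume "z1 \<noteq> z2"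
  then have q: "(z2 - z1) \<bullet> (H *v (z2 - z1)) > 0"
    using assms(1) by (simp add: sym_pos_def_mat_def)
  define m where "m = (1/2::real) *\<^sub>R z1 + (1/2::real) *\<^sub>R z2"
  have "m \<in> K"
    unfolding m_def using assms(2-4) by (intro convexD) auto
  moreover have "qp_cost H F x m
      = (qp_cost H F x z1 + qp_cost H F x z2) / 2 - (z2 - z1) \<bullet> (H *v (z2 - z1)) / 8"
    using assms(1) qp_cost_convex_combination[of H F x "1/2" z1 z2]
    by (simp add: m_def sym_pos_def_mat_def)
  moreover have "qp_cost H F x z1 = qp_cost H F x z2"
    using assms(3-6) by (meson order_antisym)
  ultimately show False
    using assms(5) q by fastforce
qed

lemma sym_pos_def_mat_lower_bound:
  fixes H :: "real^'n^'n"
  assumes "sym_pos_def_mat H"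
  obtains m where "m > 0" "\<And>z. m * (norm z)\<^sup>2 \<le> z \<bullet> (H *v z)"
proof -
  have "continuous_on (sphere 0 1) (\<lambda>z::real^'n. z \<bullet> (H *v z))"
    by (intro continuous_intros matrix_vector_mult_linear_continuous_on)
  moreover have "sphere (0::real^'n) 1 \<noteq> {}"
    by simp
  ultimately obtain u where u: "u \<in> sphere 0 1" and u_min: "\<forall>v\<in>sphere 0 1. u \<bullet> (H *v u) \<le> v \<bullet> (H *v v)"
    using continuous_attains_inf[OF compact_sphere] by blast
  have "u \<noteq> 0"
    using u by auto
  then have "u \<bullet> (H *v u) > 0"
    using assms by (simp add: sym_pos_def_mat_def)
  moreover have "u \<bullet> (H *v u) * (norm z)\<^sup>2 \<le> z \<bullet> (H *v z)" for z
  proof (cases "z = 0")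
    case False
    define v where "v = (1 / norm z) *\<^sub>R z"
    have v: "v \<in> sphere 0 1" and z: "z = norm z *\<^sub>R v"
      using False by (simp_all add: v_def)
    have "z \<bullet> (H *v z) = (norm z)\<^sup>2 * (v \<bullet> (H *v v))"
      by (subst (1 2) z) (simp add: matrix_vector_mult_scaleR power2_eq_square)
    moreover have "u \<bullet> (H *v u) \<le> v \<bullet> (H *v v)"
      using u_min v by blast
    ultimately show ?thesis
      by (simp add: mult.commute mult_right_mono)
  qed simp
  ultimately show ?thesis using that by blast
qed

lemma bounded_sublevel_qp_cost:
  assumes "sym_pos_def_mat H"
  shows "bounded {z. qp_cost H F x z \<le> b}"
proof -
  obtain m where m: "m > 0" "\<And>z. m * (norm z)\<^sup>2 \<le> z \<bullet> (H *v z)"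
    using sym_pos_def_mat_lower_bound[OF assms] by blast
  obtain C where C: "\<And>z. norm (F *v z) \<le> norm z * C"
    using bounded_linear.bounded[OF matrix_vector_mul_bounded_linear[of F]] by blast
  define c where "c = norm x * C"
  have "norm z \<le> max 1 (2 * (\<bar>b\<bar> + \<bar>c\<bar>) / m)" if "qp_cost H F x z \<le> b" for z
  proof (rule ccontr)
    assume "\<not> ?thesis"
    then have z1: "1 < norm z" and "2 * (\<bar>b\<bar> + \<bar>c\<bar>) / m < norm z"
      by auto
    then have zb: "2 * (\<bar>b\<bar> + \<bar>c\<bar>) < m * norm z"
      using m(1) by (simp add: pos_divide_less_eq mult.commute)
    have "- (c * norm z) \<le> x \<bullet> (F *v z)"
      using Cauchy_Schwarz_ineq2[of x "F *v z"] mult_left_mono[OF C[of z] norm_ge_zero[of x]]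
      by (auto simp: c_def abs_le_iff mult_ac)
    then have "m / 2 * (norm z)\<^sup>2 - c * norm z \<le> b"
      using m(2)[of z] that unfolding qp_cost_def by simp
    moreover have "2 * (\<bar>b\<bar> + \<bar>c\<bar>) * norm z < m * norm z * norm z"
      using zb z1 by (intro mult_strict_right_mono) auto
    then have "(\<bar>b\<bar> + \<bar>c\<bar>) * norm z < m / 2 * (norm z)\<^sup>2"
      by (simp add: power2_eq_square algebra_simps)
    moreover have "\<bar>b\<bar> \<le> \<bar>b\<bar> * norm z" and "c * norm z \<le> \<bar>c\<bar> * norm z"
      using z1 by (simp_all add: mult_le_cancel_left1 mult_right_mono)
    ultimately show False
      by (simp add: algebra_simps)
  qed
  then show ?thesis
    unfolding bounded_iff by blast
qed

lemma continuous_attains_inf_bounded_sublevel: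
  fixes f :: "'a::heine_borel \<Rightarrow> real"
  assumes "continuous_on UNIV f" "closed K" "K \<noteq> {}" "\<And>b. bounded {z. f z \<le> b}"
  obtains z where "z \<in> K" "\<And>y. y \<in> K \<Longrightarrow> f z \<le> f y"
proof -
  obtain z0 where z0: "z0 \<in> K"
    using assms(3) by blast
  define L where "L = K \<inter> {z. f z \<le> f z0}"
  have "compact L"
    unfolding L_def compact_eq_bounded_closed
    using assms by (auto intro!: closed_Int closed_Collect_le continuous_on_const)
  moreover have "z0 \<in> L" and "continuous_on L f"
    using z0 assms(1) by (auto simp: L_def intro: continuous_on_subset)
  ultimately obtain z where z: "z \<in> L" and z_min: "\<forall>y\<in>L. f z \<le> f y"
    using continuous_attains_inf by blast
  show ?thesis
  proof (rule that)
    show "z \<in> K"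
      using z by (simp add: L_def)
    show "f z \<le> f y" if "y \<in> K" for y
    proof (cases "f y \<le> f z0")
      case False
      then show ?thesis
        using z_min \<open>z0 \<in> L\<close> by force
    qed (use z_min that L_def in blast)
  qed
qed

lemma qp_cost_attains_inf:
  assumes "sym_pos_def_mat H" "closed K" "K \<noteq> {}"
  obtains z where "z \<in> K" "\<And>y. y \<in> K \<Longrightarrow> qp_cost H F x z \<le> qp_cost H F x y"
proof (rule continuous_attains_inf_bounded_sublevel[OF _ assms(2,3) bounded_sublevel_qp_cost[OF assms(1)]])
  show "continuous_on UNIV (qp_cost H F x)"
    unfolding qp_cost_def by (intro continuous_intros matrix_vector_mult_linear_continuous_on)
qed (use that in blast)

lemma closed_ZI: "closed (ZI G S w x I)"
  unfolding ZI_def Zj_def by (intro closed_INT ballI closed_halfspace_le)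

lemma convex_ZI: "convex (ZI G S w x I)"
  unfolding ZI_def Zj_def by (intro convex_INT ballI convex_halfspace_le)

lemma ZI_UNIV: "ZI G S w x UNIV = {z. \<forall>j. (G $ j) \<bullet> z \<le> (S $ j) \<bullet> x + w $ j}"
  by (auto simp: ZI_def Zj_def)

lemma ZI_UNIV_subset: "ZI G S w x UNIV \<subseteq> ZI G S w x I"
  unfolding ZI_def by auto

lemma zstarI_minimizer:
  assumes "sym_pos_def_mat H" "ZI G S w x I \<noteq> {}"
  shows "zstarI H F G S w x I \<in> ZI G S w x I"
    and "\<And>y. y \<in> ZI G S w x I \<Longrightarrow> qp_cost H F x (zstarI H F G S w x I) \<le> qp_cost H F x y"
proof -
  obtain z where "z \<in> ZI G S w x I" "\<forall>y\<in>ZI G S w x I. qp_cost H F x z \<le> qp_cost H F x y"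
    using qp_cost_attains_inf[OF assms(1) closed_ZI assms(2)] by metis
  then have "\<exists>!z. z \<in> ZI G S w x I \<and> (\<forall>y\<in>ZI G S w x I. qp_cost H F x z \<le> qp_cost H F x y)"
    using qp_cost_minimizer_unique[OF assms(1) convex_ZI] by blast
  from theI'[OF this] show "zstarI H F G S w x I \<in> ZI G S w x I"
    and "\<And>y. y \<in> ZI G S w x I \<Longrightarrow> qp_cost H F x (zstarI H F G S w x I) \<le> qp_cost H F x y"
    unfolding zstarI_def by blast+
qed

lemma zstarI_eqI:
  assumes "sym_pos_def_mat H" "z \<in> ZI G S w x I"
    and "\<And>y. y \<in> ZI G S w x I \<Longrightarrow> qp_cost H F x z \<le> qp_cost H F x y"
  shows "zstarI H F G S w x I = z"
proof -
  have "ZI G S w x I \<noteq> {}"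
    using assms(2) by blast
  then show ?thesis
    using qp_cost_minimizer_unique[OF assms(1) convex_ZI zstarI_minimizer(1) assms(2)]
      zstarI_minimizer(2) assms by blast
qed

lemma convex_local_global_minimum_within:
  fixes f :: "'a::real_normed_vector \<Rightarrow> real"
  assumes "convex_on K f" "z \<in> K" "e > 0" "\<And>y. y \<in> K \<inter> ball z e \<Longrightarrow> f z \<le> f y" "y \<in> K"
  shows "f z \<le> f y"
proof (rule ccontr)
  assume "\<not> f z \<le> f y"
  then have "z \<noteq> y" by auto
  then obtain t where t: "0 < t" "t \<le> 1" "t < e / dist z y"
    using field_lbound_gt_zero[of 1 "e / dist z y"] assms(3) by auto
  define v where "v = (1 - t) *\<^sub>R z + t *\<^sub>R y"
  have "dist z v = t * dist z y"
    using t(1) by (simp add: v_def dist_norm algebra_simps flip: scaleR_diff_right)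
  also have "\<dots> < e"
    using t \<open>z \<noteq> y\<close> by (simp add: pos_less_divide_eq mult.commute)
  finally have "v \<in> K \<inter> ball z e"
    using convexD[OF convex_on_imp_convex[OF assms(1)] assms(2,5)] t by (simp add: v_def)
  then have "f z \<le> (1 - t) * f z + t * f y"
    using assms(4) convex_onD[OF assms(1), of t z y] assms(2,5) t unfolding v_def by force
  then show False
    using \<open>\<not> f z \<le> f y\<close> t(1) by (simp add: algebra_simps)
qed

lemma active_Un_inactive:
  assumes "sym_pos_def_mat H" "ZI G S w x UNIV \<noteq> {}"
  shows "active_set H F G S w x \<union> inactive_set H F G S w x = UNIV"
  using zstarI_minimizer(1)[OF assms]
  by (auto simp: active_set_def inactive_set_def zstar_def ZI_UNIV less_le)

lemma zstarI_eq_zstar_if_active_subset: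
  fixes G :: "real^'nz^'nc::finite"
  assumes H: "sym_pos_def_mat H" and feasible: "ZI G S w x UNIV \<noteq> {}"
    and active: "active_set H F G S w x \<subseteq> I"
  shows "zstarI H F G S w x I = zstar H F G S w x"
proof -
  define z where "z = zstar H F G S w x"
  have z: "z \<in> ZI G S w x UNIV"
    and z_min: "\<And>y. y \<in> ZI G S w x UNIV \<Longrightarrow> qp_cost H F x z \<le> qp_cost H F x y"
    using zstarI_minimizer[OF H feasible] by (simp_all add: z_def zstar_def)
  define U where "U = (\<Inter>j\<in>-I. {y. (G $ j) \<bullet> y < (S $ j) \<bullet> x + w $ j})"
  have "open U"
    unfolding U_def by (intro open_INT ballI open_halfspace_lt) simp
  moreover have "z \<in> U"
    using z active active_Un_inactive[OF H feasible]
    by (auto simp: U_def z_def inactive_set_def)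
  ultimately obtain e where e: "e > 0" "ball z e \<subseteq> U"
    using open_contains_ball by blast
  \<comment> \<open>near z, the constraints outside I hold strictly, so there Z(x,I) and Z(x) coincide\<close>
  have "ZI G S w x I \<inter> ball z e \<subseteq> ZI G S w x UNIV"
    using e(2) by (force simp: ZI_def Zj_def U_def)
  then have local_min: "qp_cost H F x z \<le> qp_cost H F x y" if "y \<in> ZI G S w x I \<inter> ball z e" for y
    using z_min that by blast
  have convex: "convex_on (ZI G S w x I) (qp_cost H F x)"
    using convex_on_subset[OF convex_on_qp_cost[OF H] subset_UNIV convex_ZI] .
  have zI: "z \<in> ZI G S w x I"
    using z ZI_UNIV_subset by blast
  have "qp_cost H F x z \<le> qp_cost H F x y" if "y \<in> ZI G S w x I" for y
    using convex_local_global_minimum_within[OF convex zI e(1) local_min that] .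
  then show ?thesis
    unfolding z_def by (rule zstarI_eqI[OF H zI[unfolded z_def]])
qed

lemma zstarI_eq_zstar_if_feasible:
  assumes H: "sym_pos_def_mat H" and feasible: "zstarI H F G S w x I \<in> ZI G S w x UNIV"
  shows "zstarI H F G S w x I = zstar H F G S w x"
proof -
  have "ZI G S w x I \<noteq> {}"
    using feasible ZI_UNIV_subset by blast
  then have "qp_cost H F x (zstarI H F G S w x I) \<le> qp_cost H F x y" if "y \<in> ZI G S w x UNIV" for y
    using zstarI_minimizer(2)[OF H] ZI_UNIV_subset that by blast
  then show ?thesis
    unfolding zstar_def by (rule zstarI_eqI[OF H feasible, symmetric])
qed

theorem theorem1:
  fixes H :: "real^'nz^'nz" and F :: "real^'nz^'nx" and G :: "real^'nz^'nc::finite"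
    and S :: "real^'nx^'nc" and w :: "real^'nc" and \<kappa> :: real and xh x :: "real^'nx"
  assumes "sym_pos_def_mat H"
    and "\<forall>x. {z. \<forall>j. (G $ j) \<bullet> z \<le> (S $ j) \<bullet> x + w $ j} \<noteq> {}"
    and "is_GLC H F G S w \<kappa>"
  shows "zstarI H F G S w x
           (active_set H F G S w xh \<union>
            {j \<in> inactive_set H F G S w xh.
               \<not> (cball (zstar H F G S w xh) (\<kappa> * norm (x - xh)) \<subseteq> Zj G S w j x)})
         = zstar H F G S w x"
proof -
  define B where "B = cball (zstar H F G S w xh) (\<kappa> * norm (x - xh))"
  define I where "I = active_set H F G S w xh \<union> {j \<in> inactive_set H F G S w xh. \<not> B \<subseteq> Zj G S w j x}"
  have feasible: "ZI G S w y UNIV \<noteq> {}" for y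
    using assms(2) by (simp add: ZI_UNIV)
  have "zstarI H F G S w xh I = zstar H F G S w xh"
    by (rule zstarI_eq_zstar_if_active_subset[OF assms(1) feasible]) (simp add: I_def)
  moreover have "norm (zstarI H F G S w x I - zstarI H F G S w xh I) \<le> \<kappa> * norm (x - xh)"
    using assms(3) unfolding is_GLC_def by blast
  ultimately have "zstarI H F G S w x I \<in> B"
    by (simp add: B_def dist_norm norm_minus_commute)
  moreover have "B \<subseteq> Zj G S w j x" if "j \<notin> I" for j
    using that active_Un_inactive[OF assms(1) feasible] by (auto simp: I_def)
  moreover have "zstarI H F G S w x I \<in> ZI G S w x I"
    using feasible[of x] ZI_UNIV_subset[of G S w x I] by (intro zstarI_minimizer(1)[OF assms(1)]) blast
  ultimately have "zstarI H F G S w x I \<in> ZI G S w x UNIV"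
    unfolding ZI_def by blast
  then show ?thesis
    unfolding I_def B_def by (rule zstarI_eq_zstar_if_feasible[OF assms(1)])
qed

end
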